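(* Let $k$ be a field of characteristic not $2$ or $3$, let $\mathcal{A}\in k^{n+1}\otimes(\bigoplus_{l=1}^r\operatorname{Sym}_2k^{d_l})$ be a block-diagonal tensor with $r$ blocks, and let $X\subseteq\mathbb{P}^n$ be the associated intersection of symmetroids, assumed to be a complete intersection. Let $x$ be a smooth (not necessarily closed) point of $X$. Then the image of $\mathbb{P}(\ker\mathcal{A}(x,\cdot,\cdot))\subseteq\mathbb{P}^m$ under $\psi$ is a linear space in $\widehat{\mathbb{P}}^n$ of dimension $r-1$, and this linear space is precisely the space of hyperplanes in $\mathbb{P}^n$ containing the tangent space $T_xX$.
   Context: $d_l\ge2$, $m+1=\sum d_l$; $\mathcal{A}$ is an $(n+1)$-tuple $(A_0,\dots,A_n)$ of symmetric block-diagonal $(m+1)\times(m+1)$ matrices with blocks $\mathcal{A}^{(l)}$ of sizes $d_l$; $\mathcal{A}(x,\cdot,\cdot)=\sum x_iA_i$. Standing conventions: no block identically zero, each $\det\mathcal{A}^{(l)}(\mathbf{x},\cdot,\cdot)$ reduced and irreducible. $X=\bigcap_lZ(\det\mathcal{A}^{(l)}(\mathbf{x},\cdot,\cdot))$. $\psi:\mathbb{P}^m\dashrightarrow\widehat{\mathbb{P}}^n$, $y\mapsto(y^TA_0y:\dots:y^TA_ny)$, points of $\widehat{\mathbb{P}}^n$ being identified with hyperplanes of $\mathbb{P}^n$. *)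

theory Defs
  imports "Jordan_Normal_Form.Determinant" "HOL-Library.Poly_Mapping"
    "HOL-Computational_Algebra.Polynomial" "HOL-Computational_Algebra.Factorial_Ring"
begin

text \<open>The tuple (A_0,...,A_n) is given as a function
  A :: nat => nat => nat => 'k, where A i a b is the (a,b) entry of A_i
  (indices 0..m, i.e. a,b < D where D = m+1 = sum of the block sizes). Block l occupies the index range
  [blk_start d l, blk_start d l + d l). Vectors in k^(n+1), K^(m+1) are
  functions nat => _ of which only the first n+1 resp. m+1 coordinates matter.\<close>

definition blk_start :: "(nat \<Rightarrow> nat) \<Rightarrow> nat \<Rightarrow> nat" where
  "blk_start d l = (\<Sum>j<l. d j)"

definition in_block :: "(nat \<Rightarrow> nat) \<Rightarrow> nat \<Rightarrow> nat \<Rightarrow> bool" where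
  "in_block d l a \<longleftrightarrow> blk_start d l \<le> a \<and> a < blk_start d l + d l"

definition sym_block_diag_tuple ::
  "nat \<Rightarrow> nat \<Rightarrow> (nat \<Rightarrow> nat) \<Rightarrow> (nat \<Rightarrow> nat \<Rightarrow> nat \<Rightarrow> 'k::zero) \<Rightarrow> bool" where
  "sym_block_diag_tuple n r d A \<longleftrightarrow>
     (\<forall>i\<le>n. \<forall>a<sum d {..<r}. \<forall>b<sum d {..<r}. A i a b = A i b a) \<and>
     (\<forall>i\<le>n. \<forall>a<sum d {..<r}. \<forall>b<sum d {..<r}.
        \<not> (\<exists>l<r. in_block d l a \<and> in_block d l b) \<longrightarrow> A i a b = 0)"

definition block_mat :: "(nat \<Rightarrow> nat) \<Rightarrow> nat \<Rightarrow> (nat \<Rightarrow> nat \<Rightarrow> 'a) \<Rightarrow> 'a mat" where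
  "block_mat d l M = mat (d l) (d l) (\<lambda>(a,b). M (blk_start d l + a) (blk_start d l + b))"

type_synonym 'k mpoly = "(nat \<Rightarrow>\<^sub>0 nat) \<Rightarrow>\<^sub>0 'k"

definition mp_var :: "nat \<Rightarrow> 'k::{zero,one} mpoly" where
  "mp_var i = Poly_Mapping.single (Poly_Mapping.single i 1) 1"

definition mp_const :: "'k::zero \<Rightarrow> 'k mpoly" where
  "mp_const c = Poly_Mapping.single 0 c"

definition pencil_poly :: "nat \<Rightarrow> (nat \<Rightarrow> nat \<Rightarrow> nat \<Rightarrow> 'k::comm_ring_1) \<Rightarrow> nat \<Rightarrow> nat \<Rightarrow> 'k mpoly" where
  "pencil_poly n A a b = (\<Sum>i\<le>n. mp_var i * mp_const (A i a b))"

definition block_det_poly :: "nat \<Rightarrow> (nat \<Rightarrow> nat) \<Rightarrow> (nat \<Rightarrow> nat \<Rightarrow> nat \<Rightarrow> 'k::comm_ring_1) \<Rightarrow> nat \<Rightarrow> 'k mpoly" where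
  "block_det_poly n d A l = det (block_mat d l (pencil_poly n A))"

definition reduced_elem :: "'a::comm_semiring_1 \<Rightarrow> bool" where
  "reduced_elem f \<longleftrightarrow> (\<forall>g. g * g dvd f \<longrightarrow> g dvd 1)"

definition gen_ideal :: "(nat \<Rightarrow> 'a::comm_ring_1) \<Rightarrow> nat \<Rightarrow> 'a set" where
  "gen_ideal F j = {(\<Sum>l<j. g l * F l) | g. True}"

text \<open>(F 0,...,F (r-1)) is a regular sequence: the standard algebraic meaning of
  "Z(F 0) \<inter> ... \<inter> Z(F (r-1)) is a complete intersection" for homogeneous forms.\<close>
definition regular_sequence :: "(nat \<Rightarrow> 'a::comm_ring_1) \<Rightarrow> nat \<Rightarrow> bool" where
  "regular_sequence F r \<longleftrightarrow> 1 \<notin> gen_ideal F r \<and>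
     (\<forall>j<r. \<forall>g. g * F j \<in> gen_ideal F j \<longrightarrow> g \<in> gen_ideal F j)"

definition field_emb :: "('k::field \<Rightarrow> 'K::field) \<Rightarrow> bool" where
  "field_emb \<phi> \<longleftrightarrow> \<phi> 1 = 1 \<and> (\<forall>a b. \<phi> (a + b) = \<phi> a + \<phi> b) \<and> (\<forall>a b. \<phi> (a * b) = \<phi> a * \<phi> b)"

definition alg_closed :: "'K::field itself \<Rightarrow> bool" where
  "alg_closed _ \<longleftrightarrow> (\<forall>p :: 'K poly. degree p > 0 \<longrightarrow> (\<exists>z. poly p z = 0))"

definition pencil_at :: "('k \<Rightarrow> 'K::comm_ring_1) \<Rightarrow> nat \<Rightarrow> (nat \<Rightarrow> nat \<Rightarrow> nat \<Rightarrow> 'k) \<Rightarrow> (nat \<Rightarrow> 'K) \<Rightarrow> nat \<Rightarrow> nat \<Rightarrow> 'K" where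
  "pencil_at \<phi> n A x a b = (\<Sum>i\<le>n. x i * \<phi> (A i a b))"

definition block_det_at :: "('k \<Rightarrow> 'K::comm_ring_1) \<Rightarrow> nat \<Rightarrow> (nat \<Rightarrow> nat) \<Rightarrow> (nat \<Rightarrow> nat \<Rightarrow> nat \<Rightarrow> 'k) \<Rightarrow> (nat \<Rightarrow> 'K) \<Rightarrow> nat \<Rightarrow> 'K" where
  "block_det_at \<phi> n d A x l = det (block_mat d l (pencil_at \<phi> n A x))"

text \<open>Partial derivative d/dx_j of det A^(l)(x,.,.) at x: the coefficient of t in
  det A^(l)(x + t e_j,.,.) in K[t].\<close>
definition block_det_deriv :: "('k \<Rightarrow> 'K::comm_ring_1) \<Rightarrow> nat \<Rightarrow> (nat \<Rightarrow> nat) \<Rightarrow> (nat \<Rightarrow> nat \<Rightarrow> nat \<Rightarrow> 'k) \<Rightarrow> (nat \<Rightarrow> 'K) \<Rightarrow> nat \<Rightarrow> nat \<Rightarrow> 'K" where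
  "block_det_deriv \<phi> n d A x l j =
     coeff (det (block_mat d l (\<lambda>a b. [: pencil_at \<phi> n A x a b, \<phi> (A j a b) :]))) 1"

definition on_X :: "('k \<Rightarrow> 'K::comm_ring_1) \<Rightarrow> nat \<Rightarrow> nat \<Rightarrow> (nat \<Rightarrow> nat) \<Rightarrow> (nat \<Rightarrow> nat \<Rightarrow> nat \<Rightarrow> 'k) \<Rightarrow> (nat \<Rightarrow> 'K) \<Rightarrow> bool" where
  "on_X \<phi> n r d A x \<longleftrightarrow> (\<exists>i\<le>n. x i \<noteq> 0) \<and> (\<forall>l<r. block_det_at \<phi> n d A x l = 0)"

text \<open>Smoothness of the complete intersection X at x (Jacobian criterion):
  the r gradients of the defining equations are linearly independent at x.\<close>
definition smooth_pt :: "('k \<Rightarrow> 'K::field) \<Rightarrow> nat \<Rightarrow> nat \<Rightarrow> (nat \<Rightarrow> nat) \<Rightarrow> (nat \<Rightarrow> nat \<Rightarrow> nat \<Rightarrow> 'k) \<Rightarrow> (nat \<Rightarrow> 'K) \<Rightarrow> bool" where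
  "smooth_pt \<phi> n r d A x \<longleftrightarrow> on_X \<phi> n r d A x \<and>
     (\<forall>c::nat \<Rightarrow> 'K. (\<forall>j\<le>n. (\<Sum>l<r. c l * block_det_deriv \<phi> n d A x l j) = 0) \<longrightarrow> (\<forall>l<r. c l = 0))"

text \<open>Affine cone over the embedded (projective) tangent space T_x X \<subseteq> P^n.\<close>
definition tangent_cone :: "('k \<Rightarrow> 'K::comm_ring_1) \<Rightarrow> nat \<Rightarrow> nat \<Rightarrow> (nat \<Rightarrow> nat) \<Rightarrow> (nat \<Rightarrow> nat \<Rightarrow> nat \<Rightarrow> 'k) \<Rightarrow> (nat \<Rightarrow> 'K) \<Rightarrow> (nat \<Rightarrow> 'K) set" where
  "tangent_cone \<phi> n r d A x = {z. \<forall>l<r. (\<Sum>j\<le>n. block_det_deriv \<phi> n d A x l j * z j) = 0}"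

definition in_kernel :: "('k \<Rightarrow> 'K::comm_ring_1) \<Rightarrow> nat \<Rightarrow> nat \<Rightarrow> (nat \<Rightarrow> nat) \<Rightarrow> (nat \<Rightarrow> nat \<Rightarrow> nat \<Rightarrow> 'k) \<Rightarrow> (nat \<Rightarrow> 'K) \<Rightarrow> (nat \<Rightarrow> 'K) \<Rightarrow> bool" where
  "in_kernel \<phi> n r d A x y \<longleftrightarrow>
     (\<forall>a<sum d {..<r}. (\<Sum>b<sum d {..<r}. pencil_at \<phi> n A x a b * y b) = 0)"

definition psi :: "('k \<Rightarrow> 'K::comm_ring_1) \<Rightarrow> nat \<Rightarrow> (nat \<Rightarrow> nat) \<Rightarrow> (nat \<Rightarrow> nat \<Rightarrow> nat \<Rightarrow> 'k) \<Rightarrow> (nat \<Rightarrow> 'K) \<Rightarrow> nat \<Rightarrow> 'K" where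
  "psi \<phi> r d A y i = (\<Sum>a<sum d {..<r}. \<Sum>b<sum d {..<r}. y a * \<phi> (A i a b) * y b)"

text \<open>The point [h] of dual P^n (h \<noteq> 0) lies in psi(P(ker A(x,.,.))):
  h is proportional to psi(y) for some y in the kernel (psi defined at [y]).\<close>
definition in_psi_image :: "('k \<Rightarrow> 'K::field) \<Rightarrow> nat \<Rightarrow> nat \<Rightarrow> (nat \<Rightarrow> nat) \<Rightarrow> (nat \<Rightarrow> nat \<Rightarrow> nat \<Rightarrow> 'k) \<Rightarrow> (nat \<Rightarrow> 'K) \<Rightarrow> (nat \<Rightarrow> 'K) \<Rightarrow> bool" where
  "in_psi_image \<phi> n r d A x h \<longleftrightarrow> (\<exists>y c. in_kernel \<phi> n r d A x y \<and> c \<noteq> 0 \<and>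
      (\<forall>i\<le>n. psi \<phi> r d A y i = c * h i))"

end

theory Submission
  imports Defs
begin

text \<open>At a smooth point \<open>x\<close> of \<open>X\<close> the gradients of the \<open>r\<close> symmetroid equations are
  linearly independent. By Jacobi's formula \<open>\<partial>\<^sub>j det A\<^sup>(\<^sup>l\<^sup>)(x)\<close> pairs \<open>A\<^sub>j\<^sup>(\<^sup>l\<^sup>)\<close> with the
  adjugate of \<open>A\<^sup>(\<^sup>l\<^sup>)(x)\<close>, so every block is singular with nonzero adjugate. A singular
  symmetric matrix with nonzero adjugate has corank one and adjugate \<open>c z z\<^sup>T\<close>, \<open>c \<noteq> 0\<close>, with
  \<open>z\<close> spanning its kernel; hence \<open>\<partial>\<^sub>j det A\<^sup>(\<^sup>l\<^sup>)(x) = c\<^sub>l z\<^sub>l\<^sup>T A\<^sub>j\<^sup>(\<^sup>l\<^sup>) z\<^sub>l\<close>. The kernel of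
  \<open>A(x)\<close> consists of the vectors \<open>(\<mu>\<^sub>1 z\<^sub>1, \<dots>, \<mu>\<^sub>r z\<^sub>r)\<close>, and \<open>\<psi>\<close> maps such a vector to
  \<open>\<Sum> \<mu>\<^sub>l\<^sup>2 / c\<^sub>l \<cdot> \<nabla> det A\<^sup>(\<^sup>l\<^sup>)(x)\<close>. Over an algebraically closed field every coefficient
  vector is of this form, so \<open>\<psi>(\<bbbP>(ker A(x)))\<close> is the projective span of the \<open>r\<close>
  independent gradients, which is the space of hyperplanes containing \<open>T\<^sub>xX\<close>.\<close>

section \<open>Determinants and cofactors\<close>

lemma coeff_1_prod_linear_polys:
  fixes a b :: "nat \<Rightarrow> 'a::comm_ring_1"
  assumes "finite S"
  shows "coeff (\<Prod>i\<in>S. [:a i, b i:]) 1 = (\<Sum>i\<in>S. b i * (\<Prod>k\<in>S - {i}. a k))"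
proof -
  have "coeff (\<Prod>i\<in>S. [:a i, b i:]) 0 = (\<Prod>i\<in>S. a i) \<and>
        coeff (\<Prod>i\<in>S. [:a i, b i:]) 1 = (\<Sum>i\<in>S. b i * (\<Prod>k\<in>S - {i}. a k))"
    using assms
  proof (induction S rule: finite_induct)
    case (insert x F)
    have "(\<Sum>i\<in>F. b i * (\<Prod>k\<in>insert x F - {i}. a k)) = a x * (\<Sum>i\<in>F. b i * (\<Prod>k\<in>F - {i}. a k))"
      unfolding sum_distrib_left
    proof (rule sum.cong)
      fix i assume "i \<in> F"
      then have "insert x F - {i} = insert x (F - {i})" "x \<notin> F - {i}" using insert by auto
      then show "b i * (\<Prod>k\<in>insert x F - {i}. a k) = a x * (b i * (\<Prod>k\<in>F - {i}. a k))"
        using insert by (simp add: algebra_simps)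
    qed simp
    moreover have "insert x F - {x} = F" using insert by auto
    ultimately show ?case using insert by (simp add: mult_pCons_left algebra_simps)
  qed simp
  then show ?thesis by blast
qed

lemma det_mat_leibniz:
  "det (mat k k (\<lambda>(a,b). f a b)) = (\<Sum>p | p permutes {0..<k}. signof p * (\<Prod>i = 0..<k. f i (p i)))"
proof -
  have "det (mat k k (\<lambda>(a,b). f a b)) =
      (\<Sum>p | p permutes {0..<k}. signof p * (\<Prod>i = 0..<k. mat k k (\<lambda>(a,b). f a b) $$ (i, p i)))"
    by (rule det_def') simp
  also have "\<dots> = (\<Sum>p | p permutes {0..<k}. signof p * (\<Prod>i = 0..<k. f i (p i)))"
  proof (rule sum.cong[OF refl])
    fix p assume "p \<in> {p. p permutes {0..<k}}"
    then have "\<And>i. i < k \<Longrightarrow> p i < k" using permutes_in_image by fastforce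
    then show "signof p * (\<Prod>i = 0..<k. mat k k (\<lambda>(a,b). f a b) $$ (i, p i)) =
        signof p * (\<Prod>i = 0..<k. f i (p i))"
      by (intro arg_cong[where f = "(*) _"] prod.cong) auto
  qed
  finally show ?thesis .
qed

lemma det_row_replaced_leibniz:
  assumes "i < k"
  shows "det (mat k k (\<lambda>(a,b). if a = i then v b else m a b)) =
    (\<Sum>p | p permutes {0..<k}. signof p * (v (p i) * (\<Prod>j\<in>{0..<k} - {i}. m j (p j))))"
  unfolding det_mat_leibniz
proof (rule sum.cong[OF refl])
  fix p
  have "(\<Prod>j\<in>{0..<k} - {i}. if j = i then v (p j) else m j (p j)) = (\<Prod>j\<in>{0..<k} - {i}. m j (p j))"
    by (rule prod.cong) auto
  then show "signof p * (\<Prod>j = 0..<k. if j = i then v (p j) else m j (p j)) =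
      signof p * (v (p i) * (\<Prod>j\<in>{0..<k} - {i}. m j (p j)))"
    using assms by (simp add: prod.remove[of "{0..<k}" i])
qed

lemma cofactor_cong_except_row:
  assumes "A \<in> carrier_mat k k" "B \<in> carrier_mat k k"
    and "\<And>a b. a < k \<Longrightarrow> b < k \<Longrightarrow> a \<noteq> i \<Longrightarrow> A $$ (a,b) = B $$ (a,b)"
  shows "cofactor A i j = cofactor B i j"
proof -
  have "mat_delete A i j = mat_delete B i j"
    unfolding mat_delete_def using assms by (intro cong_mat) auto
  then show ?thesis unfolding cofactor_def by simp
qed

lemma det_row_replaced:
  assumes "i < k"
  shows "det (mat k k (\<lambda>(a,b). if a = i then v b else m a b)) =
    (\<Sum>j<k. v j * cofactor (mat k k (\<lambda>(a,b). m a b)) i j)"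
proof -
  let ?R = "mat k k (\<lambda>(a,b). if a = i then v b else m a b)"
  have "det ?R = (\<Sum>j<k. ?R $$ (i,j) * cofactor ?R i j)"
    by (rule laplace_expansion_row[OF _ assms]) simp
  also have "\<dots> = (\<Sum>j<k. v j * cofactor (mat k k (\<lambda>(a,b). m a b)) i j)"
    using assms by (intro sum.cong refl arg_cong2[where f = "(*)"] cofactor_cong_except_row) auto
  finally show ?thesis .
qed

lemma coeff_det_linear_pencil:
  "coeff (det (mat k k (\<lambda>(a,b). [:m a b, nn a b:]))) 1 =
    (\<Sum>i<k. \<Sum>j<k. nn i j * cofactor (mat k k (\<lambda>(a,b). m a b)) i j)"
proof -
  let ?P = "{p. p permutes {0..<k}}"
  have coeff_of_int_mult: "coeff (of_int c * q) n = of_int c * coeff q n" for c q n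
    by (simp add: of_int_poly)
  have "coeff (det (mat k k (\<lambda>(a,b). [:m a b, nn a b:]))) 1 =
      (\<Sum>p\<in>?P. signof p * (\<Sum>i\<in>{0..<k}. nn i (p i) * (\<Prod>j\<in>{0..<k} - {i}. m j (p j))))"
    by (simp only: det_mat_leibniz coeff_sum coeff_of_int_mult
        coeff_1_prod_linear_polys[OF finite_atLeastLessThan])
  also have "\<dots> = (\<Sum>i\<in>{0..<k}. \<Sum>p\<in>?P. signof p * (nn i (p i) * (\<Prod>j\<in>{0..<k} - {i}. m j (p j))))"
    by (simp add: sum_distrib_left sum.swap[of _ ?P])
  also have "\<dots> = (\<Sum>i\<in>{0..<k}. det (mat k k (\<lambda>(a,b). if a = i then nn i b else m a b)))"
    by (intro sum.cong refl det_row_replaced_leibniz[symmetric]) simp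
  also have "\<dots> = (\<Sum>i<k. \<Sum>j<k. nn i j * cofactor (mat k k (\<lambda>(a,b). m a b)) i j)"
    by (simp add: atLeast0LessThan det_row_replaced)
  finally show ?thesis .
qed

definition in_null_space :: "'a::semiring_0 mat \<Rightarrow> (nat \<Rightarrow> 'a) \<Rightarrow> bool" where
  "in_null_space M v \<longleftrightarrow> (\<forall>a<dim_row M. (\<Sum>b<dim_col M. M $$ (a,b) * v b) = 0)"

lemma in_null_space_iff_mult_mat_vec:
  assumes "M \<in> carrier_mat k k"
  shows "in_null_space M v \<longleftrightarrow> M *\<^sub>v vec k v = 0\<^sub>v k"
  using assms by (auto simp: in_null_space_def vec_eq_iff scalar_prod_def atLeast0LessThan)

lemma in_null_space_scale:
  fixes M :: "'a::comm_semiring_0 mat"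
  assumes "in_null_space M v"
  shows "in_null_space M (\<lambda>b. s * v b)"
proof -
  have "(\<Sum>b<dim_col M. M $$ (a,b) * (s * v b)) = s * (\<Sum>b<dim_col M. M $$ (a,b) * v b)" for a
    by (simp add: sum_distrib_left mult_ac)
  then show ?thesis using assms unfolding in_null_space_def by simp
qed

lemma cofactor_eq_0_if_null_vector_vanishes:
  fixes M :: "'a::field mat"
  assumes M: "M \<in> carrier_mat k k" and a: "a < k" and b: "b < k"
    and w: "in_null_space M w" "w b = 0" "\<exists>j<k. w j \<noteq> 0"
  shows "cofactor M a b = 0"
proof -
  define R where "R = mat k k (\<lambda>(i,j). if i = a then of_bool (j = b) else M $$ (i,j))"
  have R: "R \<in> carrier_mat k k" by (simp add: R_def)
  have M_eq: "M = mat k k (\<lambda>(i,j). M $$ (i,j))" using M by auto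
  have "det R = (\<Sum>j<k. of_bool (j = b) * cofactor M a j)"
    unfolding R_def by (subst (2) M_eq) (rule det_row_replaced[OF a])
  also have "\<dots> = cofactor M a b" using b by simp
  finally have "det R = cofactor M a b" .
  moreover have "in_null_space R w"
    unfolding in_null_space_def
  proof (intro allI impI)
    fix i assume "i < dim_row R"
    then show "(\<Sum>j<dim_col R. R $$ (i,j) * w j) = 0"
      using w b M by (cases "i = a") (auto simp: R_def in_null_space_def)
  qed
  then have "R *\<^sub>v vec k w = 0\<^sub>v k" using in_null_space_iff_mult_mat_vec[OF R] by blast
  moreover have "vec k w \<noteq> 0\<^sub>v k" using w(3) by (auto simp: vec_eq_iff)
  ultimately show ?thesis
    using det_0_iff_vec_prod_zero_field[OF R] vec_carrier by metis
qed

lemma cofactor_row_in_null_space: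
  assumes M: "M \<in> carrier_mat k k" and "det M = 0" and "c < k"
  shows "in_null_space M (\<lambda>b. cofactor M c b)"
  unfolding in_null_space_def
proof (intro allI impI)
  fix a assume "a < dim_row M"
  then have a: "a < k" using M by simp
  have "(\<Sum>b<dim_col M. M $$ (a,b) * cofactor M c b) = (M * adj_mat M) $$ (a,c)"
    using M a \<open>c < k\<close> unfolding times_mat_def scalar_prod_def adj_mat_def
    by (auto simp: atLeast0LessThan intro!: sum.cong)
  also have "\<dots> = 0" using adj_mat(2)[OF M] assms a by simp
  finally show "(\<Sum>b<dim_col M. M $$ (a,b) * cofactor M c b) = 0" .
qed

lemma cofactor_symmetric:
  assumes M: "M \<in> carrier_mat k k" and sym: "\<And>i j. i < k \<Longrightarrow> j < k \<Longrightarrow> M $$ (i,j) = M $$ (j,i)"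
  shows "cofactor M a b = cofactor M b a"
proof -
  have "mat_delete M b a = transpose_mat (mat_delete M a b)"
    unfolding mat_delete_def using M sym by (intro eq_matI) auto
  then have "det (mat_delete M b a) = det (mat_delete M a b)"
    using det_transpose mat_delete_carrier[OF M] by metis
  then show ?thesis unfolding cofactor_def by (simp add: add.commute)
qed

lemma null_space_spanned_by_cofactor_row:
  fixes M :: "'a::field mat"
  assumes M: "M \<in> carrier_mat k k" and "det M = 0"
    and a0: "a0 < k" and b0: "b0 < k" and c0: "cofactor M a0 b0 \<noteq> 0"
    and v: "in_null_space M v"
  shows "\<exists>\<mu>. \<forall>b<k. v b = \<mu> * cofactor M a0 b"
proof -
  define \<mu> where "\<mu> = v b0 / cofactor M a0 b0"
  define w where "w b = v b - \<mu> * cofactor M a0 b" for b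
  have "in_null_space M w"
    using v cofactor_row_in_null_space[OF M \<open>det M = 0\<close> a0]
    unfolding in_null_space_def w_def
    by (simp add: algebra_simps sum_subtractf flip: sum_distrib_left)
  moreover have "w b0 = 0" unfolding w_def \<mu>_def using c0 by simp
  ultimately have "\<forall>j<k. w j = 0"
    using cofactor_eq_0_if_null_vector_vanishes[OF M a0 b0] c0 by blast
  then show ?thesis unfolding w_def by auto
qed

lemma symmetric_corank_one_adjugate:
  fixes M :: "'a::field mat"
  assumes M: "M \<in> carrier_mat k k" and sym: "\<And>i j. i < k \<Longrightarrow> j < k \<Longrightarrow> M $$ (i,j) = M $$ (j,i)"
    and "det M = 0" and "\<exists>a<k. \<exists>b<k. cofactor M a b \<noteq> 0"
  obtains c z where "c \<noteq> 0" "\<And>a b. a < k \<Longrightarrow> b < k \<Longrightarrow> cofactor M a b = c * z a * z b"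
    "in_null_space M z" "\<And>v. in_null_space M v \<Longrightarrow> \<exists>\<mu>. \<forall>b<k. v b = \<mu> * z b"
proof -
  obtain a0 b0 where a0: "a0 < k" and b0: "b0 < k" and c0: "cofactor M a0 b0 \<noteq> 0"
    using assms(4) by blast
  define z where "z b = cofactor M a0 b" for b
  note spanned = null_space_spanned_by_cofactor_row[OF M \<open>det M = 0\<close> a0 b0 c0]
  have "\<exists>\<mu>. \<forall>b<k. cofactor M a b = \<mu> * z b" if "a < k" for a
    unfolding z_def by (rule spanned) (rule cofactor_row_in_null_space[OF M \<open>det M = 0\<close> that])
  then obtain \<mu> where \<mu>: "\<And>a b. a < k \<Longrightarrow> b < k \<Longrightarrow> cofactor M a b = \<mu> a * z b"
    by metis
  define c where "c = \<mu> b0 / z b0"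
  have "\<mu> a = c * z a" if a: "a < k" for a
  proof -
    have "\<mu> a * z b0 = \<mu> b0 * z a"
      using \<mu>[OF a b0] \<mu>[OF b0 a] cofactor_symmetric[OF M sym] by metis
    then show ?thesis unfolding c_def using c0 by (simp add: z_def field_simps)
  qed
  then have cof: "\<And>a b. a < k \<Longrightarrow> b < k \<Longrightarrow> cofactor M a b = c * z a * z b"
    using \<mu> by simp
  then have "c \<noteq> 0" using a0 b0 c0 by force
  moreover have "in_null_space M z"
    unfolding z_def by (rule cofactor_row_in_null_space[OF M \<open>det M = 0\<close> a0])
  ultimately show ?thesis using that cof spanned unfolding z_def by blast
qed

section \<open>Block-diagonal matrices\<close>

definition quad_form :: "'a::semiring_0 mat \<Rightarrow> (nat \<Rightarrow> 'a) \<Rightarrow> 'a" where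
  "quad_form M u = (\<Sum>a<dim_row M. \<Sum>b<dim_col M. u a * M $$ (a,b) * u b)"

lemma quad_form_scale:
  fixes M :: "'a::comm_semiring_1 mat"
  assumes "M \<in> carrier_mat k k" and "\<forall>b<k. v b = \<mu> * u b"
  shows "quad_form M v = \<mu>\<^sup>2 * quad_form M u"
  using assms unfolding quad_form_def sum_distrib_left
  by (intro sum.cong refl) (simp add: power2_eq_square mult_ac)

definition block_diagonal :: "nat \<Rightarrow> (nat \<Rightarrow> nat) \<Rightarrow> (nat \<Rightarrow> nat \<Rightarrow> 'a::zero) \<Rightarrow> bool" where
  "block_diagonal r d F \<longleftrightarrow> (\<forall>a<sum d {..<r}. \<forall>b<sum d {..<r}.
     \<not> (\<exists>l<r. in_block d l a \<and> in_block d l b) \<longrightarrow> F a b = 0)"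

lemma blk_start_Suc: "blk_start d (Suc l) = blk_start d l + d l"
  by (simp add: blk_start_def)

lemma blk_end_le_blk_start: "l < l' \<Longrightarrow> blk_start d l + d l \<le> blk_start d l'"
proof (induction l')
  case (Suc l')
  then show ?case by (cases "l = l'") (auto simp: blk_start_Suc)
qed simp

lemma in_block_unique: "in_block d l a \<Longrightarrow> in_block d l' a \<Longrightarrow> l = l'"
  unfolding in_block_def by (metis blk_end_le_blk_start le_trans linorder_neqE_nat not_le)

lemma in_block_blk_start_add: "a < d l \<Longrightarrow> in_block d l (blk_start d l + a)"
  by (simp add: in_block_def)

lemma blk_start_add_less_sum: "l < r \<Longrightarrow> a < d l \<Longrightarrow> blk_start d l + a < sum d {..<r}"
  using blk_end_le_blk_start[of l r d] by (simp add: blk_start_def)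

lemma in_block_exists: "a < sum d {..<r} \<Longrightarrow> \<exists>l<r. in_block d l a"
proof (induction r)
  case (Suc r)
  show ?case
  proof (cases "a < sum d {..<r}")
    case True then show ?thesis using Suc by (meson less_SucI)
  next
    case False
    then have "in_block d r a" using Suc.prems by (simp add: in_block_def blk_start_def)
    then show ?thesis by blast
  qed
qed simp

lemma all_less_sum_iff_all_blocks:
  "(\<forall>a<sum d {..<r}. P a) \<longleftrightarrow> (\<forall>l<r. \<forall>a<d l. P (blk_start d l + a))"
proof
  assume "\<forall>l<r. \<forall>a<d l. P (blk_start d l + a)"
  show "\<forall>a<sum d {..<r}. P a"
  proof (intro allI impI)
    fix a assume "a < sum d {..<r}"
    then obtain l where "l < r" "in_block d l a" using in_block_exists by blast
    then show "P a"
      using \<open>\<forall>l<r. \<forall>a<d l. P (blk_start d l + a)\<close>[rule_format, of l "a - blk_start d l"]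
      by (auto simp: in_block_def)
  qed
qed (simp add: blk_start_add_less_sum)

lemma sum_over_blocks:
  "(\<Sum>a<sum d {..<r}. f a) = (\<Sum>l<r. \<Sum>a<d l. (f (blk_start d l + a) :: 'a::comm_monoid_add))"
proof (induction r)
  case (Suc r)
  have "(\<Sum>a<s + e. f a) = (\<Sum>a<s. f a) + (\<Sum>a<e. f (s + a))" for s e
    by (induction e) (simp_all add: add.assoc)
  then show ?case using Suc by (simp add: blk_start_def)
qed simp

lemma block_diagonal_row_sum:
  fixes F :: "nat \<Rightarrow> nat \<Rightarrow> 'a::comm_semiring_0"
  assumes F: "block_diagonal r d F" and l: "l < r" and a: "a < d l"
  shows "(\<Sum>b<sum d {..<r}. F (blk_start d l + a) b * y b) =
    (\<Sum>b<d l. F (blk_start d l + a) (blk_start d l + b) * y (blk_start d l + b))"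
proof -
  have "F (blk_start d l + a) (blk_start d l' + b) = 0" if "l' < r" "l' \<noteq> l" "b < d l'" for l' b
    using F that l a blk_start_add_less_sum in_block_unique in_block_blk_start_add
    unfolding block_diagonal_def by metis
  then have "(\<Sum>b<d l'. F (blk_start d l + a) (blk_start d l' + b) * y (blk_start d l' + b)) = 0"
    if "l' < r" "l' \<noteq> l" for l'
    using that by simp
  then show ?thesis
    unfolding sum_over_blocks[where f = "\<lambda>b. F (blk_start d l + a) b * y b"]
    using l by (simp add: sum.remove[of _ l])
qed

lemma block_diagonal_quad_sum:
  fixes F :: "nat \<Rightarrow> nat \<Rightarrow> 'a::comm_semiring_0"
  assumes F: "block_diagonal r d F"
  shows "(\<Sum>a<sum d {..<r}. \<Sum>b<sum d {..<r}. y a * F a b * y b) =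
    (\<Sum>l<r. quad_form (block_mat d l F) (\<lambda>a. y (blk_start d l + a)))"
proof -
  have "(\<Sum>a<sum d {..<r}. \<Sum>b<sum d {..<r}. y a * F a b * y b) =
     (\<Sum>a<sum d {..<r}. y a * (\<Sum>b<sum d {..<r}. F a b * y b))"
    by (simp add: sum_distrib_left mult.assoc)
  also have "\<dots> = (\<Sum>l<r. \<Sum>a<d l. y (blk_start d l + a) *
      (\<Sum>b<d l. F (blk_start d l + a) (blk_start d l + b) * y (blk_start d l + b)))"
    unfolding sum_over_blocks[where f = "\<lambda>a. y a * (\<Sum>b<sum d {..<r}. F a b * y b)"]
    using block_diagonal_row_sum[OF F] by (intro sum.cong refl) auto
  also have "\<dots> = (\<Sum>l<r. quad_form (block_mat d l F) (\<lambda>a. y (blk_start d l + a)))"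
    by (simp add: quad_form_def block_mat_def sum_distrib_left mult.assoc)
  finally show ?thesis .
qed

definition glue_blocks :: "nat \<Rightarrow> (nat \<Rightarrow> nat) \<Rightarrow> (nat \<Rightarrow> nat \<Rightarrow> 'a::comm_monoid_add) \<Rightarrow> nat \<Rightarrow> 'a" where
  "glue_blocks r d v b = (\<Sum>l<r. if in_block d l b then v l (b - blk_start d l) else 0)"

lemma glue_blocks_blk_start_add:
  assumes "l < r" "a < d l"
  shows "glue_blocks r d v (blk_start d l + a) = v l a"
proof -
  have "glue_blocks r d v (blk_start d l + a) = (\<Sum>l'<r. if l' = l then v l a else 0)"
    unfolding glue_blocks_def
    using in_block_unique[of d _ "blk_start d l + a" l] in_block_blk_start_add[of a d l] assms(2)
    by (intro sum.cong) auto
  then show ?thesis using assms(1) by simp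
qed

section \<open>Linear forms vanishing on a common kernel\<close>

lemma annihilator_subtract_last_form:
  fixes g :: "nat \<Rightarrow> nat \<Rightarrow> 'a::field"
  assumes h: "\<forall>z. (\<forall>l<Suc m. (\<Sum>j\<le>n. g l j * z j) = 0) \<longrightarrow> (\<Sum>j\<le>n. h j * z j) = 0"
    and z1: "\<forall>l<m. (\<Sum>j\<le>n. g l j * z1 j) = 0" "(\<Sum>j\<le>n. g m j * z1 j) \<noteq> 0"
  defines "\<alpha> \<equiv> (\<Sum>j\<le>n. h j * z1 j) / (\<Sum>j\<le>n. g m j * z1 j)"
  shows "\<forall>z. (\<forall>l<m. (\<Sum>j\<le>n. g l j * z j) = 0) \<longrightarrow> (\<Sum>j\<le>n. (h j - \<alpha> * g m j) * z j) = 0"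
proof (intro allI impI)
  let ?p = "\<lambda>f z. (\<Sum>j\<le>n. f j * z j)"
  fix z assume z: "\<forall>l<m. ?p (g l) z = 0"
  define t where "t = ?p (g m) z / ?p (g m) z1"
  have lin: "?p f (\<lambda>j. z j - t * z1 j) = ?p f z - t * ?p f z1" for f
    by (simp add: algebra_simps sum_subtractf sum_distrib_left)
  have "\<forall>l<Suc m. ?p (g l) (\<lambda>j. z j - t * z1 j) = 0"
    unfolding lin using z z1 by (auto simp: less_Suc_eq t_def)
  then have hz: "?p h z = t * ?p h z1" using h lin[of h] by simp
  have "?p (\<lambda>j. h j - \<alpha> * g m j) z = ?p h z - \<alpha> * ?p (g m) z"
    by (simp add: algebra_simps sum_subtractf sum_distrib_left)
  also have "\<dots> = 0" using hz z1(2) unfolding t_def \<alpha>_def by (simp add: field_simps)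
  finally show "?p (\<lambda>j. h j - \<alpha> * g m j) z = 0" .
qed

lemma annihilator_of_common_kernel_in_span:
  fixes g :: "nat \<Rightarrow> nat \<Rightarrow> 'a::field"
  assumes "\<forall>z. (\<forall>l<m. (\<Sum>j\<le>n. g l j * z j) = 0) \<longrightarrow> (\<Sum>j\<le>n. h j * z j) = 0"
  shows "\<exists>c. \<forall>i\<le>n. h i = (\<Sum>l<m. c l * g l i)"
  using assms
proof (induction m arbitrary: h)
  case 0
  have "h i = 0" if "i \<le> n" for i
  proof -
    have "(\<Sum>j\<le>n. h j * of_bool (j = i)) = 0" using 0 by simp
    then show ?thesis using that by simp
  qed
  then show ?case by simp
next
  case (Suc m)
  show ?case
  proof (cases "\<exists>z1. (\<forall>l<m. (\<Sum>j\<le>n. g l j * z1 j) = 0) \<and> (\<Sum>j\<le>n. g m j * z1 j) \<noteq> 0")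
    case True
    then obtain z1 where z1: "\<forall>l<m. (\<Sum>j\<le>n. g l j * z1 j) = 0" "(\<Sum>j\<le>n. g m j * z1 j) \<noteq> 0"
      by blast
    define \<alpha> where "\<alpha> = (\<Sum>j\<le>n. h j * z1 j) / (\<Sum>j\<le>n. g m j * z1 j)"
    obtain c where "\<forall>i\<le>n. h i - \<alpha> * g m i = (\<Sum>l<m. c l * g l i)"
      using Suc.IH[OF annihilator_subtract_last_form[OF Suc.prems z1, folded \<alpha>_def]] by blast
    then have "\<forall>i\<le>n. h i = (\<Sum>l<Suc m. (c(m := \<alpha>)) l * g l i)"
      by (simp add: algebra_simps)
    then show ?thesis by blast
  next
    case False
    then have "\<forall>z. (\<forall>l<m. (\<Sum>j\<le>n. g l j * z j) = 0) \<longrightarrow> (\<Sum>j\<le>n. h j * z j) = 0"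
      using Suc.prems by (auto simp: less_Suc_eq)
    then obtain c where "\<forall>i\<le>n. h i = (\<Sum>l<m. c l * g l i)" using Suc.IH by blast
    then have "\<forall>i\<le>n. h i = (\<Sum>l<Suc m. (c(m := 0)) l * g l i)" by simp
    then show ?thesis by blast
  qed
qed

lemma annihilates_common_kernel_iff_in_span:
  fixes g :: "nat \<Rightarrow> nat \<Rightarrow> 'a::field"
  shows "(\<forall>z. (\<forall>l<m. (\<Sum>j\<le>n. g l j * z j) = 0) \<longrightarrow> (\<Sum>j\<le>n. h j * z j) = 0) \<longleftrightarrow>
    (\<exists>c. \<forall>i\<le>n. h i = (\<Sum>l<m. c l * g l i))"
proof
  assume "\<exists>c. \<forall>i\<le>n. h i = (\<Sum>l<m. c l * g l i)"
  then obtain c where c: "\<forall>i\<le>n. h i = (\<Sum>l<m. c l * g l i)" by blast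
  have "(\<Sum>j\<le>n. h j * z j) = (\<Sum>l<m. c l * (\<Sum>j\<le>n. g l j * z j))" for z
    using c by (simp add: sum_distrib_left sum_distrib_right sum.swap[of _ "{..n}"] mult_ac)
  then show "\<forall>z. (\<forall>l<m. (\<Sum>j\<le>n. g l j * z j) = 0) \<longrightarrow> (\<Sum>j\<le>n. h j * z j) = 0" by simp
qed (rule annihilator_of_common_kernel_in_span)

section \<open>Smooth points of intersections of block symmetroids\<close>

lemma field_emb_0:
  assumes "field_emb \<phi>"
  shows "\<phi> 0 = 0"
proof -
  have "\<phi> (0 + 0) = \<phi> 0 + \<phi> 0" using assms unfolding field_emb_def by blast
  then show ?thesis by (metis add.right_neutral add_left_imp_eq)
qed

lemma alg_closed_square_root:
  assumes "alg_closed TYPE('K::field)"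
  shows "\<exists>s::'K. s * s = t"
proof -
  have "degree [:-t, 0, 1:] > 0" by simp
  then obtain s where "poly [:-t, 0, 1:] s = 0" using assms unfolding alg_closed_def by blast
  then show ?thesis by (auto simp: algebra_simps)
qed

lemma block_det_deriv_eq_cofactor_sum:
  "block_det_deriv \<phi> n d A x l j = (\<Sum>a<d l. \<Sum>b<d l.
     block_mat d l (\<lambda>a b. \<phi> (A j a b)) $$ (a,b) * cofactor (block_mat d l (pencil_at \<phi> n A x)) a b)"
  unfolding block_det_deriv_def block_mat_def coeff_det_linear_pencil by simp

lemma in_kernel_iff_block_null_spaces:
  assumes "block_diagonal r d (pencil_at \<phi> n A x)"
  shows "in_kernel \<phi> n r d A x y \<longleftrightarrow>
    (\<forall>l<r. in_null_space (block_mat d l (pencil_at \<phi> n A x)) (\<lambda>b. y (blk_start d l + b)))"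
proof -
  have row: "(\<Sum>b<sum d {..<r}. pencil_at \<phi> n A x (blk_start d l + a) b * y b) =
      (\<Sum>b<d l. block_mat d l (pencil_at \<phi> n A x) $$ (a,b) * y (blk_start d l + b))"
    if "l < r" "a < d l" for l a
    using block_diagonal_row_sum[OF assms that] that by (simp add: block_mat_def)
  have "in_kernel \<phi> n r d A x y \<longleftrightarrow>
      (\<forall>l<r. \<forall>a<d l. (\<Sum>b<sum d {..<r}. pencil_at \<phi> n A x (blk_start d l + a) b * y b) = 0)"
    unfolding in_kernel_def all_less_sum_iff_all_blocks ..
  also have "\<dots> \<longleftrightarrow> (\<forall>l<r. \<forall>a<d l.
      (\<Sum>b<d l. block_mat d l (pencil_at \<phi> n A x) $$ (a,b) * y (blk_start d l + b)) = 0)"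
    using row by simp
  also have "\<dots> \<longleftrightarrow>
      (\<forall>l<r. in_null_space (block_mat d l (pencil_at \<phi> n A x)) (\<lambda>b. y (blk_start d l + b)))"
    unfolding in_null_space_def by (simp add: block_mat_def)
  finally show ?thesis .
qed

lemma psi_eq_sum_block_quad_forms:
  assumes "field_emb \<phi>" and "sym_block_diag_tuple n r d A" and "j \<le> n"
  shows "psi \<phi> r d A y j = (\<Sum>l<r. quad_form (block_mat d l (\<lambda>a b. \<phi> (A j a b))) (\<lambda>a. y (blk_start d l + a)))"
proof -
  have "block_diagonal r d (\<lambda>a b. \<phi> (A j a b))"
    using assms field_emb_0 unfolding sym_block_diag_tuple_def block_diagonal_def by metis
  then show ?thesis unfolding psi_def by (rule block_diagonal_quad_sum)
qed

locale smooth_point_of_block_symmetroids =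
  fixes \<phi> :: "'k::field \<Rightarrow> 'K::field" and n r :: nat and d :: "nat \<Rightarrow> nat"
    and A :: "nat \<Rightarrow> nat \<Rightarrow> nat \<Rightarrow> 'k" and x :: "nat \<Rightarrow> 'K"
  assumes emb: "field_emb \<phi>" and sym_block_diag: "sym_block_diag_tuple n r d A"
    and smooth: "smooth_pt \<phi> n r d A x"
begin

abbreviation grad :: "nat \<Rightarrow> nat \<Rightarrow> 'K" where
  "grad l j \<equiv> block_det_deriv \<phi> n d A x l j"

abbreviation pencil_block :: "nat \<Rightarrow> 'K mat" where
  "pencil_block l \<equiv> block_mat d l (pencil_at \<phi> n A x)"

abbreviation coeff_block :: "nat \<Rightarrow> nat \<Rightarrow> 'K mat" where
  "coeff_block j l \<equiv> block_mat d l (\<lambda>a b. \<phi> (A j a b))"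

lemma pencil_block_diagonal: "block_diagonal r d (pencil_at \<phi> n A x)"
  using sym_block_diag field_emb_0[OF emb]
  unfolding sym_block_diag_tuple_def block_diagonal_def pencil_at_def by simp

lemma pencil_block_symmetric:
  assumes "l < r" "a < d l" "b < d l"
  shows "pencil_block l $$ (a,b) = pencil_block l $$ (b,a)"
  using sym_block_diag blk_start_add_less_sum[OF assms(1)] assms(2,3)
  unfolding sym_block_diag_tuple_def block_mat_def pencil_at_def by simp

lemma det_pencil_block: "l < r \<Longrightarrow> det (pencil_block l) = 0"
  using smooth unfolding smooth_pt_def on_X_def block_det_at_def by blast

lemma gradients_independent:
  "(\<forall>j\<le>n. (\<Sum>l<r. c l * grad l j) = 0) \<Longrightarrow> \<forall>l<r. c l = 0"
  using smooth unfolding smooth_pt_def by blast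

lemma pencil_block_has_nonzero_cofactor:
  assumes "l < r"
  shows "\<exists>a<d l. \<exists>b<d l. cofactor (pencil_block l) a b \<noteq> 0"
proof (rule ccontr)
  assume "\<not> ?thesis"
  then have "grad l j = 0" for j by (simp add: block_det_deriv_eq_cofactor_sum)
  then have "\<forall>j\<le>n. (\<Sum>l'<r. of_bool (l' = l) * grad l' j) = 0" by simp
  then show False using gradients_independent assms by fastforce
qed

text \<open>Jacobi's formula together with the rank-one adjugate of the block.\<close>
lemma block_kernel_generator:
  assumes "l < r"
  shows "\<exists>z c. c \<noteq> 0 \<and> (\<forall>j. grad l j = c * quad_form (coeff_block j l) z) \<and>
    in_null_space (pencil_block l) z \<and>
    (\<forall>v. in_null_space (pencil_block l) v \<longrightarrow> (\<exists>\<mu>. \<forall>b<d l. v b = \<mu> * z b))"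
proof -
  have M: "pencil_block l \<in> carrier_mat (d l) (d l)" by (simp add: block_mat_def)
  show ?thesis
  proof (rule symmetric_corank_one_adjugate[OF M pencil_block_symmetric[OF assms]
        det_pencil_block[OF assms] pencil_block_has_nonzero_cofactor[OF assms]])
    fix c z
    assume c: "c \<noteq> 0"
      and cof: "\<And>a b. a < d l \<Longrightarrow> b < d l \<Longrightarrow> cofactor (pencil_block l) a b = c * z a * z b"
      and null: "in_null_space (pencil_block l) z"
      and span: "\<And>v. in_null_space (pencil_block l) v \<Longrightarrow> \<exists>\<mu>. \<forall>b<d l. v b = \<mu> * z b"
    have "grad l j = c * quad_form (coeff_block j l) z" for j
    proof -
      have "grad l j = (\<Sum>a<d l. \<Sum>b<d l. c * (z a * coeff_block j l $$ (a,b) * z b))"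
        unfolding block_det_deriv_eq_cofactor_sum by (intro sum.cong refl) (simp add: cof mult_ac)
      also have "\<dots> = c * quad_form (coeff_block j l) z"
        by (simp add: quad_form_def sum_distrib_left block_mat_def)
      finally show ?thesis .
    qed
    then show ?thesis using c null span by blast
  qed
qed

lemma block_kernel_generators:
  obtains c :: "nat \<Rightarrow> 'K" and z :: "nat \<Rightarrow> nat \<Rightarrow> 'K" where
    "\<And>l. l < r \<Longrightarrow> c l \<noteq> 0" "\<And>l j. l < r \<Longrightarrow> grad l j = c l * quad_form (coeff_block j l) (z l)"
    "\<And>l. l < r \<Longrightarrow> in_null_space (pencil_block l) (z l)"
    "\<And>l v. l < r \<Longrightarrow> in_null_space (pencil_block l) v \<Longrightarrow> \<exists>\<mu>. \<forall>b<d l. v b = \<mu> * z l b"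
proof -
  have "\<forall>l. \<exists>z c. l < r \<longrightarrow> c \<noteq> 0 \<and> (\<forall>j. grad l j = c * quad_form (coeff_block j l) z) \<and>
    in_null_space (pencil_block l) z \<and>
    (\<forall>v. in_null_space (pencil_block l) v \<longrightarrow> (\<exists>\<mu>. \<forall>b<d l. v b = \<mu> * z b))"
    using block_kernel_generator by blast
  then obtain z c where "\<forall>l. l < r \<longrightarrow> c l \<noteq> 0 \<and> (\<forall>j. grad l j = c l * quad_form (coeff_block j l) (z l)) \<and>
    in_null_space (pencil_block l) (z l) \<and>
    (\<forall>v. in_null_space (pencil_block l) v \<longrightarrow> (\<exists>\<mu>. \<forall>b<d l. v b = \<mu> * z l b))"
    by metis
  then show thesis using that by blast
qed

lemma psi_of_kernel_vector_in_span:
  assumes "in_kernel \<phi> n r d A x y"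
  shows "\<exists>a. \<forall>i\<le>n. psi \<phi> r d A y i = (\<Sum>l<r. a l * grad l i)"
proof -
  obtain z c where c: "\<And>l. l < r \<Longrightarrow> c l \<noteq> 0"
    and grad: "\<And>l j. l < r \<Longrightarrow> grad l j = c l * quad_form (coeff_block j l) (z l)"
    and "\<And>l. l < r \<Longrightarrow> in_null_space (pencil_block l) (z l)"
    and span: "\<And>l v. l < r \<Longrightarrow> in_null_space (pencil_block l) v \<Longrightarrow> \<exists>\<mu>. \<forall>b<d l. v b = \<mu> * z l b"
    by (rule block_kernel_generators) (rule that)
  have "\<forall>l<r. in_null_space (pencil_block l) (\<lambda>b. y (blk_start d l + b))"
    using assms in_kernel_iff_block_null_spaces[OF pencil_block_diagonal] by blast
  then have "\<forall>l. \<exists>m. l < r \<longrightarrow> (\<forall>b<d l. y (blk_start d l + b) = m * z l b)"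
    using span by blast
  then obtain \<mu> where \<mu>: "\<forall>l. l < r \<longrightarrow> (\<forall>b<d l. y (blk_start d l + b) = \<mu> l * z l b)"
    by (rule choice[THEN exE])
  have "psi \<phi> r d A y i = (\<Sum>l<r. (\<mu> l)\<^sup>2 / c l * grad l i)" if "i \<le> n" for i
  proof -
    have "psi \<phi> r d A y i = (\<Sum>l<r. quad_form (coeff_block i l) (\<lambda>b. y (blk_start d l + b)))"
      by (rule psi_eq_sum_block_quad_forms[OF emb sym_block_diag that])
    also have "\<dots> = (\<Sum>l<r. (\<mu> l)\<^sup>2 * quad_form (coeff_block i l) (z l))"
      using \<mu> by (intro sum.cong refl quad_form_scale) (auto simp: block_mat_def)
    also have "\<dots> = (\<Sum>l<r. (\<mu> l)\<^sup>2 / c l * grad l i)"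
      by (intro sum.cong refl) (simp add: c grad)
    finally show ?thesis .
  qed
  then show ?thesis by (intro exI[of _ "\<lambda>l. (\<mu> l)\<^sup>2 / c l"]) simp
qed

lemma span_in_psi_image_of_kernel:
  assumes sqrt: "\<And>t::'K. \<exists>s. s * s = t"
  shows "\<exists>y. in_kernel \<phi> n r d A x y \<and> (\<forall>i\<le>n. psi \<phi> r d A y i = (\<Sum>l<r. a l * grad l i))"
proof -
  obtain z c where "\<And>l. l < r \<Longrightarrow> c l \<noteq> 0"
    and grad: "\<And>l j. l < r \<Longrightarrow> grad l j = c l * quad_form (coeff_block j l) (z l)"
    and null: "\<And>l. l < r \<Longrightarrow> in_null_space (pencil_block l) (z l)"
    and "\<And>l v. l < r \<Longrightarrow> in_null_space (pencil_block l) v \<Longrightarrow> \<exists>\<mu>. \<forall>b<d l. v b = \<mu> * z l b"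
    by (rule block_kernel_generators) (rule that)
  obtain \<sigma> where \<sigma>: "\<forall>l. \<sigma> l * \<sigma> l = a l * c l"
    using choice[of "\<lambda>l s. s * s = a l * c l"] sqrt by blast
  define y where "y = glue_blocks r d (\<lambda>l b. \<sigma> l * z l b)"
  have y: "y (blk_start d l + b) = \<sigma> l * z l b" if "l < r" "b < d l" for l b
    unfolding y_def using that by (rule glue_blocks_blk_start_add)
  have "in_kernel \<phi> n r d A x y"
    unfolding in_kernel_iff_block_null_spaces[OF pencil_block_diagonal]
  proof (intro allI impI)
    fix l assume "l < r"
    have "in_null_space (pencil_block l) (\<lambda>b. \<sigma> l * z l b)"
      by (rule in_null_space_scale[OF null[OF \<open>l < r\<close>]])
    moreover have "in_null_space (pencil_block l) (\<lambda>b. y (blk_start d l + b)) \<longleftrightarrow>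
        in_null_space (pencil_block l) (\<lambda>b. \<sigma> l * z l b)"
      using y[OF \<open>l < r\<close>] by (simp add: in_null_space_def block_mat_def)
    ultimately show "in_null_space (pencil_block l) (\<lambda>b. y (blk_start d l + b))" by simp
  qed
  moreover have "psi \<phi> r d A y i = (\<Sum>l<r. a l * grad l i)" if "i \<le> n" for i
  proof -
    have "psi \<phi> r d A y i = (\<Sum>l<r. quad_form (coeff_block i l) (\<lambda>b. y (blk_start d l + b)))"
      by (rule psi_eq_sum_block_quad_forms[OF emb sym_block_diag that])
    also have "\<dots> = (\<Sum>l<r. (\<sigma> l)\<^sup>2 * quad_form (coeff_block i l) (z l))"
      using y by (intro sum.cong refl quad_form_scale) (auto simp: block_mat_def)
    also have "\<dots> = (\<Sum>l<r. a l * grad l i)"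
      using \<sigma> grad by (intro sum.cong refl) (simp add: power2_eq_square mult_ac)
    finally show ?thesis .
  qed
  ultimately show ?thesis by blast
qed

lemma psi_image_or_zero_iff_in_span:
  assumes "alg_closed TYPE('K)"
  shows "(in_psi_image \<phi> n r d A x h \<or> (\<forall>i\<le>n. h i = 0)) \<longleftrightarrow>
    (\<exists>a. \<forall>i\<le>n. h i = (\<Sum>l<r. a l * grad l i))"
proof
  assume "in_psi_image \<phi> n r d A x h \<or> (\<forall>i\<le>n. h i = 0)"
  then show "\<exists>a. \<forall>i\<le>n. h i = (\<Sum>l<r. a l * grad l i)"
  proof
    assume "in_psi_image \<phi> n r d A x h"
    then obtain y e where "in_kernel \<phi> n r d A x y" "e \<noteq> 0" "\<forall>i\<le>n. psi \<phi> r d A y i = e * h i"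
      unfolding in_psi_image_def by blast
    moreover obtain a where "\<forall>i\<le>n. psi \<phi> r d A y i = (\<Sum>l<r. a l * grad l i)"
      using psi_of_kernel_vector_in_span[OF \<open>in_kernel \<phi> n r d A x y\<close>] by blast
    ultimately have "h i = (\<Sum>l<r. a l / e * grad l i)" if "i \<le> n" for i
      using that by (simp add: eq_divide_eq sum_divide_distrib[symmetric] mult.commute)
    then show ?thesis by (intro exI[of _ "\<lambda>l. a l / e"]) simp
  qed (auto intro: exI[of _ "\<lambda>_. 0"])
next
  assume "\<exists>a. \<forall>i\<le>n. h i = (\<Sum>l<r. a l * grad l i)"
  then obtain a where "\<forall>i\<le>n. h i = (\<Sum>l<r. a l * grad l i)" by blast
  moreover obtain y where "in_kernel \<phi> n r d A x y" "\<forall>i\<le>n. psi \<phi> r d A y i = (\<Sum>l<r. a l * grad l i)"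
    using span_in_psi_image_of_kernel alg_closed_square_root[OF assms] by blast
  ultimately have "in_psi_image \<phi> n r d A x h"
    unfolding in_psi_image_def by (intro exI[of _ y] exI[of _ 1]) simp
  then show "in_psi_image \<phi> n r d A x h \<or> (\<forall>i\<le>n. h i = 0)" ..
qed

lemma in_span_iff_annihilates_tangent_cone:
  "(\<exists>a. \<forall>i\<le>n. h i = (\<Sum>l<r. a l * grad l i)) \<longleftrightarrow>
    (\<forall>z\<in>tangent_cone \<phi> n r d A x. (\<Sum>i\<le>n. h i * z i) = 0)"
  unfolding tangent_cone_def annihilates_common_kernel_iff_in_span[symmetric] by blast

end

theorem proposition4p1p1:
  fixes n r :: nat and d :: "nat \<Rightarrow> nat"
    and A :: "nat \<Rightarrow> nat \<Rightarrow> nat \<Rightarrow> 'k::field"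
    and \<phi> :: "'k \<Rightarrow> 'K::field" and x :: "nat \<Rightarrow> 'K"
  assumes char2: "(2::'k) \<noteq> 0" and char3: "(3::'k) \<noteq> 0"
    and blocks: "\<forall>l<r. d l \<ge> 2"
    and symbd: "sym_block_diag_tuple n r d A"
    and nonzero_blocks: "\<forall>l<r. \<exists>i\<le>n. \<exists>a<d l. \<exists>b<d l.
                           A i (blk_start d l + a) (blk_start d l + b) \<noteq> 0"
    and red: "\<forall>l<r. reduced_elem (block_det_poly n d A l)"
    and irr: "\<forall>l<r. irreducible (block_det_poly n d A l)"
    and ci: "regular_sequence (block_det_poly n d A) r"
    and hom: "field_emb \<phi>" and algcl: "alg_closed TYPE('K)"
    and smooth: "smooth_pt \<phi> n r d A x"
  shows "(\<forall>h. (\<exists>i\<le>n. h i \<noteq> 0) \<longrightarrow>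
            (in_psi_image \<phi> n r d A x h \<longleftrightarrow>
             (\<forall>z\<in>tangent_cone \<phi> n r d A x. (\<Sum>i\<le>n. h i * z i) = 0)))
       \<and> (\<exists>w :: nat \<Rightarrow> nat \<Rightarrow> 'K.
            (\<forall>c. (\<forall>i\<le>n. (\<Sum>l<r. c l * w l i) = 0) \<longrightarrow> (\<forall>l<r. c l = 0)) \<and>
            (\<forall>h. (in_psi_image \<phi> n r d A x h \<or> (\<forall>i\<le>n. h i = 0)) \<longleftrightarrow>
                 (\<exists>c. \<forall>i\<le>n. h i = (\<Sum>l<r. c l * w l i))))"
proof -
  interpret smooth_point_of_block_symmetroids \<phi> n r d A x
    using hom symbd smooth by unfold_locales
  have "in_psi_image \<phi> n r d A x h \<longleftrightarrow> (\<forall>z\<in>tangent_cone \<phi> n r d A x. (\<Sum>i\<le>n. h i * z i) = 0)"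
    if "\<exists>i\<le>n. h i \<noteq> 0" for h
    using that psi_image_or_zero_iff_in_span[OF algcl, of h] in_span_iff_annihilates_tangent_cone[of h]
    by auto
  moreover have "\<forall>c. (\<forall>i\<le>n. (\<Sum>l<r. c l * grad l i) = 0) \<longrightarrow> (\<forall>l<r. c l = 0)"
    using gradients_independent by blast
  ultimately show ?thesis
    using psi_image_or_zero_iff_in_span[OF algcl] by blast
qed

end
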